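(* Let $n,r\geq1$, $\epsilon>0$, and let $t\mapsto(x_1(t),\ldots,x_r(t))$ be a continuous map $[0,\epsilon)\to(\mathbb R^n)^r$. For $I\subseteq\{1,\ldots,r\}$ and $t\in[0,\epsilon)$, let $F_I(t)$ be the convex hull of $\{x_i(t): i\in I\}$, and $P(t)=F_{\{1,\ldots,r\}}(t)$. Assume that for every $t\in(0,\epsilon)$ the points $x_i(t)$ are pairwise distinct vertices of $P(t)$, and that whenever $F_I(t)$ is a face of $P(t)$ of dimension $k$ for some $t\in(0,\epsilon)$, then $F_I(t)$ is a face of $P(t)$ of dimension $k$ for all $t\in(0,\epsilon)$. Let $I$ be such that $F(t):=F_I(t)$ is a face of $P(t)$ for all $t\in(0,\epsilon)$. Then every proper face of $F(0)$ is contained in the union of the sets $F_K(0)$, over all $K$ such that $F_K(t)$ is a proper face of $F(t)$ for $t\in(0,\epsilon)$. *)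

theory Defs
  imports "HOL-Analysis.Analysis"
begin

definition hullF :: "(real \<Rightarrow> nat \<Rightarrow> 'a::euclidean_space) \<Rightarrow> nat set \<Rightarrow> real \<Rightarrow> 'a set" where
  "hullF x I t = convex hull (x t ` I)"

end

theory Submission
  imports Defs
begin

text \<open>Let \<open>y\<close> lie in a proper face \<open>G\<close> of \<open>F(0)\<close>, exposed by a hyperplane \<open>c \<bullet> v = b\<close> that some
  vertex \<open>x\<^sub>k(0)\<close> of \<open>F(0)\<close> misses. Writing \<open>y\<close> as a convex combination of the vertices and
  using the same weights at time \<open>t\<close> gives points \<open>z(t) \<in> F(t)\<close> converging to \<open>y\<close>. Pushing
  \<open>z(t)\<close> slightly away from \<open>x\<^sub>k(t)\<close> leaves \<open>F(t)\<close> through its relative boundary, so for small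
  \<open>t\<close> some proper face \<open>F\<^sub>K(t)\<close> of \<open>F(t)\<close> comes close to \<open>y\<close>. By the stability assumption
  \<open>F\<^sub>K\<close> is a proper face of \<open>F\<close> for all \<open>t\<close>, and by continuity \<open>F\<^sub>K(0)\<close> is close to \<open>F\<^sub>K(t)\<close>.
  Hence \<open>y\<close> lies in the closure of the finite union of the polytopes \<open>F\<^sub>K(0)\<close>, which is closed.\<close>

lemma convex_hull_image_weights:
  fixes f :: "'b \<Rightarrow> 'a::real_vector"
  assumes "finite I" and "y \<in> convex hull (f ` I)"
  obtains u where "\<forall>i\<in>I. 0 \<le> u i" "sum u I = 1" "(\<Sum>i\<in>I. u i *\<^sub>R f i) = y"
proof -
  obtain w where w0: "\<forall>v\<in>f ` I. 0 \<le> w v" and w1: "sum w (f ` I) = 1"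
    and wy: "(\<Sum>v\<in>f ` I. w v *\<^sub>R v) = y"
    using assms convex_hull_finite[of "f ` I"] by auto
  define J where "J = inv_into I f ` f ` I"
  have JI: "J \<subseteq> I" unfolding J_def by (auto intro: inv_into_into)
  have fJ: "f ` J = f ` I" unfolding J_def by (rule image_inv_into_cancel) auto
  have injJ: "inj_on f J" unfolding J_def by (rule inj_onI) (auto simp: f_inv_into_f)
  define u where "u i = (if i \<in> J then w (f i) else 0)" for i
  have sum_u: "(\<Sum>i\<in>I. g i (u i)) = (\<Sum>i\<in>J. g i (w (f i)))" if "\<And>i. g i 0 = 0"
    for g :: "'b \<Rightarrow> real \<Rightarrow> 'c::comm_monoid_add"
    using assms(1) JI that by (intro sum.mono_neutral_cong_right) (auto simp: u_def)
  show thesis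
  proof
    show "\<forall>i\<in>I. 0 \<le> u i" using w0 by (simp add: u_def)
    show "sum u I = 1"
      using sum_u[of "\<lambda>i v. v"] sum.reindex[OF injJ, of w] w1 fJ by simp
    show "(\<Sum>i\<in>I. u i *\<^sub>R f i) = y"
      using sum_u[of "\<lambda>i v. v *\<^sub>R f i"] sum.reindex[OF injJ, of "\<lambda>v. w v *\<^sub>R v"] wy fJ by simp
  qed
qed

lemma face_of_convex_hull_image:
  fixes f :: "'b \<Rightarrow> 'a::euclidean_space"
  assumes "finite I" and "H face_of convex hull (f ` I)"
  obtains K where "K \<subseteq> I" "H = convex hull (f ` K)"
proof -
  obtain S where "S \<subseteq> f ` I" "H = convex hull S"
    using face_of_convex_hull_subset assms finite_imp_compact finite_imageI by metis
  moreover from \<open>S \<subseteq> f ` I\<close> have "S = f ` {i\<in>I. f i \<in> S}" by blast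
  ultimately show thesis using that[of "{i\<in>I. f i \<in> S}"] by auto
qed

lemma proper_face_of_convex_hull_exposed:
  fixes V :: "'a::euclidean_space set"
  assumes "finite V" and "G face_of convex hull V" and "G \<noteq> convex hull V"
  obtains c b where "\<forall>v\<in>V. c \<bullet> v \<le> b" "\<forall>w\<in>G. c \<bullet> w = b" "\<exists>v\<in>V. c \<bullet> v < b"
proof -
  have "polyhedron (convex hull V)"
    using assms(1) by (simp add: polytope_imp_polyhedron polytope_convex_hull)
  then have "G exposed_face_of convex hull V" using assms(2) exposed_face_of_polyhedron by blast
  then obtain c b where le: "convex hull V \<subseteq> {v. c \<bullet> v \<le> b}"
    and G: "G = convex hull V \<inter> {v. c \<bullet> v = b}"
    unfolding exposed_face_of_def by blast
  have le_V: "\<forall>v\<in>V. c \<bullet> v \<le> b" using le hull_subset[of V convex] by blast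
  moreover have "\<forall>w\<in>G. c \<bullet> w = b" using G by blast
  moreover have "\<exists>v\<in>V. c \<bullet> v < b"
  proof (rule ccontr)
    assume "\<not> (\<exists>v\<in>V. c \<bullet> v < b)"
    then have "V \<subseteq> {v. c \<bullet> v = b}" using le_V by force
    then have "convex hull V \<subseteq> {v. c \<bullet> v = b}" by (simp add: convex_hyperplane hull_minimal)
    then show False using G assms(3) by blast
  qed
  ultimately show thesis using that by blast
qed

text \<open>The closest point of \<open>S\<close> to a point of \<open>affine hull S\<close> outside \<open>S\<close> lies in the relative
  frontier, which for a polytope is the union of its proper faces.\<close>

lemma polytope_proper_face_near_outside_point:
  fixes S :: "'a::euclidean_space set"
  assumes "polytope S" and "z \<in> S" and "p \<in> affine hull S" and "p \<notin> S"
  obtains H q where "H face_of S" "H \<noteq> S" "q \<in> H" "dist p q \<le> dist p z"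
proof -
  have closed: "closed S" by (simp add: assms(1) polytope_imp_closed)
  have "closest_point S p \<in> rel_frontier S"
    using assms rel_interior_subset by (intro closest_point_in_rel_frontier closed) auto
  then obtain H where "H face_of S" "H \<noteq> S" "closest_point S p \<in> H"
    using rel_frontier_of_polyhedron_alt[OF polytope_imp_polyhedron[OF assms(1)]] by blast
  moreover have "dist p (closest_point S p) \<le> dist p z" by (rule closest_point_le[OF closed assms(2)])
  ultimately show thesis using that by blast
qed

lemma convex_hull_proper_face_near_pushed_point:
  fixes V :: "'a::euclidean_space set"
  assumes V: "finite V" and z: "z \<in> convex hull V" and v: "v \<in> V" and s: "0 \<le> s"
    and below: "\<forall>w\<in>V. c \<bullet> w < \<beta>" and above: "\<beta> < c \<bullet> (z + s *\<^sub>R (z - v))"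
  obtains H q where "H face_of convex hull V" "H \<noteq> convex hull V" "q \<in> H"
    "dist q z \<le> 2 * s * norm (z - v)"
proof -
  define p where "p = z + s *\<^sub>R (z - v)"
  have "convex hull V \<subseteq> {w. c \<bullet> w < \<beta>}"
    using below by (intro hull_minimal) (auto simp: convex_halfspace_lt)
  then have outside: "p \<notin> convex hull V" using above by (auto simp: p_def)
  have "z \<in> affine hull (convex hull V)" "v \<in> affine hull (convex hull V)"
    using z hull_inc[OF v, where P=convex] by (meson hull_inc)+
  moreover have "p = (1 + s) *\<^sub>R z + (- s) *\<^sub>R v" by (simp add: p_def algebra_simps)
  ultimately have affine: "p \<in> affine hull (convex hull V)"
    using mem_affine[OF affine_affine_hull, of z "convex hull V" v "1 + s" "- s"] by simp
  obtain H q where H: "H face_of convex hull V" "H \<noteq> convex hull V" "q \<in> H"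
    and pq: "dist p q \<le> dist p z"
    using polytope_proper_face_near_outside_point[OF polytope_convex_hull[OF V] z affine outside]
    by blast
  have "dist p z = s * norm (z - v)" using s by (simp add: p_def dist_norm)
  then have "dist q z \<le> 2 * s * norm (z - v)"
    using pq dist_triangle[of q z p] by (simp add: dist_commute)
  with H that show thesis by blast
qed

lemma convex_hull_image_near:
  fixes f g :: "'b \<Rightarrow> 'a::real_normed_vector"
  assumes "\<forall>i\<in>K. dist (f i) (g i) \<le> d" and "q \<in> convex hull (f ` K)"
  obtains a where "a \<in> convex hull (g ` K)" "dist q a \<le> d"
proof -
  define T where "T = (\<Union>a\<in>convex hull (g ` K). \<Union>w\<in>cball 0 d. {a + w})"
  have "convex hull (f ` K) \<subseteq> T"
  proof (rule hull_minimal)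
    show "convex T" unfolding T_def by (intro convex_sums convex_convex_hull convex_cball)
    show "f ` K \<subseteq> T"
    proof
      fix v assume "v \<in> f ` K"
      then obtain i where i: "i \<in> K" "v = f i" by blast
      then have "g i \<in> convex hull (g ` K)" "f i - g i \<in> cball 0 d"
        using assms(1) by (auto simp: hull_inc dist_norm norm_minus_commute)
      then show "v \<in> T" unfolding T_def using i by force
    qed
  qed
  then obtain a w where "a \<in> convex hull (g ` K)" "w \<in> cball 0 d" "q = a + w"
    using assms(2) unfolding T_def by blast
  then show thesis using that by (auto simp: dist_norm)
qed

lemma proper_face_of_limit_polytope_approx:
  fixes X :: "'b \<Rightarrow> 'c \<Rightarrow> 'a::euclidean_space"
  assumes I: "finite I"
    and lim: "\<And>i. i \<in> I \<Longrightarrow> ((\<lambda>t. X t i) \<longlongrightarrow> x0 i) F"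
    and G: "G face_of convex hull (x0 ` I)" "G \<noteq> convex hull (x0 ` I)"
    and y: "y \<in> G" and \<delta>: "\<delta> > 0"
  shows "eventually (\<lambda>t. \<exists>H. H face_of convex hull (X t ` I) \<and> H \<noteq> convex hull (X t ` I) \<and>
           (\<exists>q\<in>H. dist q y < \<delta>)) F"
proof -
  obtain c b where cI: "\<forall>i\<in>I. c \<bullet> x0 i \<le> b" and cG: "\<forall>w\<in>G. c \<bullet> w = b"
    and "\<exists>i\<in>I. c \<bullet> x0 i < b"
    using proper_face_of_convex_hull_exposed[OF finite_imageI[OF I] G] by auto
  then obtain k where k: "k \<in> I" "c \<bullet> x0 k < b" by blast
  have yhull: "y \<in> convex hull (x0 ` I)" using y G(1) face_of_imp_subset by blast
  obtain u where u0: "\<forall>i\<in>I. 0 \<le> u i" and u1: "sum u I = 1" and uy: "(\<Sum>i\<in>I. u i *\<^sub>R x0 i) = y"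
    using convex_hull_image_weights[OF I yhull] by blast
  define z where "z t = (\<Sum>i\<in>I. u i *\<^sub>R X t i)" for t
  define \<eta> where "\<eta> = b - c \<bullet> x0 k"
  define s where "s = \<delta> / (4 * (norm (y - x0 k) + 1))"
  define p where "p t = z t + s *\<^sub>R (z t - X t k)" for t
  have \<eta>: "\<eta> > 0" using k by (simp add: \<eta>_def)
  have s: "s > 0" using \<delta> by (simp add: s_def add_nonneg_pos)
  have s_small: "s * norm (y - x0 k) < \<delta> / 4"
  proof -
    have pos: "norm (y - x0 k) + 1 > 0" by (simp add: add_nonneg_pos)
    have "s * norm (y - x0 k) < s * (norm (y - x0 k) + 1)" using s by simp
    also have "\<dots> = \<delta> / 4" unfolding s_def using pos by (simp add: field_simps)
    finally show ?thesis .
  qed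
  have lim_z: "(z \<longlongrightarrow> y) F"
    unfolding z_def uy[symmetric] by (intro tendsto_intros lim)
  have "eventually (\<lambda>t. dist (z t) y < \<delta> / 2) F" using \<delta> by (intro tendstoD[OF lim_z]) simp
  moreover have "eventually (\<lambda>t. s * norm (z t - X t k) < \<delta> / 4) F"
  proof (rule order_tendstoD(2)[OF _ s_small])
    show "((\<lambda>t. s * norm (z t - X t k)) \<longlongrightarrow> s * norm (y - x0 k)) F"
      using k(1) by (intro tendsto_intros lim_z lim)
  qed
  moreover have "eventually (\<lambda>t. \<forall>i\<in>I. c \<bullet> X t i < b + s * \<eta> / 2) F"
  proof (intro eventually_ball_finite[OF I] ballI)
    fix i assume i: "i \<in> I"
    have "((\<lambda>t. c \<bullet> X t i) \<longlongrightarrow> c \<bullet> x0 i) F" using i by (intro tendsto_intros lim)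
    moreover have "c \<bullet> x0 i < b + s * \<eta> / 2"
      using bspec[OF cI i] mult_pos_pos[OF s \<eta>] by linarith
    ultimately show "eventually (\<lambda>t. c \<bullet> X t i < b + s * \<eta> / 2) F" by (rule order_tendstoD(2))
  qed
  moreover have "eventually (\<lambda>t. b + s * \<eta> / 2 < c \<bullet> p t) F"
  proof (rule order_tendstoD(1))
    show "((\<lambda>t. c \<bullet> p t) \<longlongrightarrow> c \<bullet> (y + s *\<^sub>R (y - x0 k))) F"
      unfolding p_def using k(1) by (intro tendsto_intros lim_z lim)
    have "c \<bullet> (y + s *\<^sub>R (y - x0 k)) = b + s * \<eta>"
      using cG y by (simp add: \<eta>_def inner_add_right inner_diff_right)
    then show "b + s * \<eta> / 2 < c \<bullet> (y + s *\<^sub>R (y - x0 k))" using s \<eta> by simp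
  qed
  ultimately show ?thesis
  proof eventually_elim
    case (elim t)
    have z: "z t \<in> convex hull (X t ` I)"
      unfolding z_def by (rule convex_sum) (auto simp: I u0 u1 hull_inc)
    have "\<forall>w\<in>X t ` I. c \<bullet> w < b + s * \<eta> / 2" using elim(3) by blast
    then obtain H q where H: "H face_of convex hull (X t ` I)" "H \<noteq> convex hull (X t ` I)" "q \<in> H"
      and qz: "dist q (z t) \<le> 2 * s * norm (z t - X t k)"
      using convex_hull_proper_face_near_pushed_point[OF finite_imageI[OF I] z imageI[OF k(1)]
          less_imp_le[OF s] _ elim(4)[unfolded p_def]] by blast
    have "dist q y < \<delta>" using qz elim(1,2) dist_triangle[of q y "z t"] by linarith
    with H show ?case by blast
  qed
qed

lemma proper_subface_persists:
  fixes x :: "real \<Rightarrow> nat \<Rightarrow> 'a::euclidean_space"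
  assumes stable: "\<And>J t s. J \<subseteq> V \<Longrightarrow> t \<in> T \<Longrightarrow> s \<in> T \<Longrightarrow>
                   hullF x J t face_of hullF x V t \<Longrightarrow>
                   hullF x J s face_of hullF x V s \<and> aff_dim (hullF x J s) = aff_dim (hullF x J t)"
    and IV: "I \<subseteq> V" and KI: "K \<subseteq> I" and t: "t \<in> T" and s: "s \<in> T"
    and Iface: "hullF x I t face_of hullF x V t"
    and Kface: "hullF x K t face_of hullF x I t" and Kproper: "hullF x K t \<noteq> hullF x I t"
  shows "hullF x K s face_of hullF x I s \<and> hullF x K s \<noteq> hullF x I s"
proof
  have KV: "K \<subseteq> V" using KI IV by blast
  have K_s: "hullF x K s face_of hullF x V s" "aff_dim (hullF x K s) = aff_dim (hullF x K t)"
    using stable[OF KV t s face_of_trans[OF Kface Iface]] by auto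
  have I_s: "aff_dim (hullF x I s) = aff_dim (hullF x I t)" using stable[OF IV t s Iface] by auto
  show "hullF x K s face_of hullF x I s"
    using face_of_subset[OF K_s(1)] KI IV by (simp add: hullF_def hull_mono image_mono)
  have "aff_dim (hullF x K t) < aff_dim (hullF x I t)"
    using face_of_aff_dim_lt[OF _ Kface Kproper] by (simp add: hullF_def)
  then show "hullF x K s \<noteq> hullF x I s" using K_s(2) I_s by auto
qed

lemma closed_Union_hullF:
  assumes "finite V"
  shows "closed (\<Union> {hullF x K t | K. K \<subseteq> V \<and> P K})"
proof (rule closed_Union)
  have "{hullF x K t | K. K \<subseteq> V \<and> P K} \<subseteq> (\<lambda>K. hullF x K t) ` Pow V" by blast
  then show "finite {hullF x K t | K. K \<subseteq> V \<and> P K}"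
    using assms by (meson finite_Pow_iff finite_imageI finite_subset)
  show "\<forall>S\<in>{hullF x K t | K. K \<subseteq> V \<and> P K}. closed S"
  proof clarify
    fix K assume "K \<subseteq> V"
    then have "compact (x t ` K)" using assms by (meson finite_subset finite_imageI finite_imp_compact)
    then show "closed (hullF x K t)" by (simp add: hullF_def compact_convex_hull compact_imp_closed)
  qed
qed

lemma hullF_proper_face_near_limit_face:
  fixes x :: "real \<Rightarrow> nat \<Rightarrow> 'a::euclidean_space"
  assumes I: "finite I" and eps: "\<epsilon> > 0"
    and cont: "\<And>i. i \<in> I \<Longrightarrow> continuous_on {0..<\<epsilon>} (\<lambda>t. x t i)"
    and G: "G face_of hullF x I 0" "G \<noteq> hullF x I 0" and y: "y \<in> G" and \<delta>: "\<delta> > 0"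
  obtains t K a where "t \<in> {0<..<\<epsilon>}" "K \<subseteq> I"
    "hullF x K t face_of hullF x I t" "hullF x K t \<noteq> hullF x I t"
    "a \<in> hullF x K 0" "dist a y < \<delta>"
proof -
  define F where "F = at (0::real) within {0<..<\<epsilon>}"
  have lim: "((\<lambda>t. x t i) \<longlongrightarrow> x 0 i) F" if "i \<in> I" for i
  proof -
    have "((\<lambda>t. x t i) \<longlongrightarrow> x 0 i) (at 0 within {0..<\<epsilon>})"
      using cont[OF that] eps unfolding continuous_on_def by auto
    then show ?thesis unfolding F_def by (rule tendsto_within_subset) auto
  qed
  have ev_t: "eventually (\<lambda>t. t \<in> {0<..<\<epsilon>}) F" unfolding F_def by (simp add: eventually_at_filter)
  have ev_face: "eventually (\<lambda>t. \<exists>H. H face_of hullF x I t \<and> H \<noteq> hullF x I t \<and>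
      (\<exists>q\<in>H. dist q y < \<delta> / 2)) F"
    using proper_face_of_limit_polytope_approx[OF I lim G[unfolded hullF_def] y, of "\<delta> / 2"] \<delta>
    by (simp add: hullF_def)
  have ev_near: "eventually (\<lambda>t. \<forall>i\<in>I. dist (x t i) (x 0 i) < \<delta> / 2) F"
    using \<delta> by (intro eventually_ball_finite[OF I] ballI tendstoD[OF lim]) simp_all
  have ev: "eventually (\<lambda>t. t \<in> {0<..<\<epsilon>} \<and>
      (\<exists>H. H face_of hullF x I t \<and> H \<noteq> hullF x I t \<and> (\<exists>q\<in>H. dist q y < \<delta> / 2)) \<and>
      (\<forall>i\<in>I. dist (x t i) (x 0 i) < \<delta> / 2)) F"
    by (intro eventually_conj ev_t ev_face ev_near)
  have "F \<noteq> bot"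
    unfolding F_def using islimpt_greaterThanLessThan1[OF eps] by (simp add: trivial_limit_within)
  then obtain t H q where t: "t \<in> {0<..<\<epsilon>}" and H: "H face_of hullF x I t" "H \<noteq> hullF x I t"
    and q: "q \<in> H" "dist q y < \<delta> / 2" and near: "\<forall>i\<in>I. dist (x t i) (x 0 i) < \<delta> / 2"
    using eventually_happens'[OF _ ev] by blast
  obtain K where KI: "K \<subseteq> I" and HK: "H = hullF x K t"
    using face_of_convex_hull_image[OF I H(1)[unfolded hullF_def]] by (auto simp: hullF_def)
  have "\<forall>i\<in>K. dist (x t i) (x 0 i) \<le> \<delta> / 2" using near KI by fastforce
  then obtain a where a: "a \<in> hullF x K 0" "dist q a \<le> \<delta> / 2"
    using convex_hull_image_near q(1) HK unfolding hullF_def by blast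
  have "dist a y < \<delta>" using a(2) q(2) dist_triangle[of a y q] by (simp add: dist_commute)
  with t KI H HK a(1) that show thesis by blast
qed

theorem lemma6p1:
  fixes x :: "real \<Rightarrow> nat \<Rightarrow> 'a::euclidean_space"
    and r :: nat and \<epsilon> :: real and I :: "nat set"
  assumes r: "r \<ge> 1"
    and eps: "\<epsilon> > 0"
    and cont: "\<And>i. i \<in> {1..r} \<Longrightarrow> continuous_on {0..<\<epsilon>} (\<lambda>t. x t i)"
    and distinct: "\<And>t. t \<in> {0<..<\<epsilon>} \<Longrightarrow> inj_on (x t) {1..r}"
    and vertices: "\<And>t i. t \<in> {0<..<\<epsilon>} \<Longrightarrow> i \<in> {1..r} \<Longrightarrow>
                     x t i extreme_point_of hullF x {1..r} t"
    and stable: "\<And>J t s. J \<subseteq> {1..r} \<Longrightarrow> t \<in> {0<..<\<epsilon>} \<Longrightarrow> s \<in> {0<..<\<epsilon>} \<Longrightarrow>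
                   hullF x J t face_of hullF x {1..r} t \<Longrightarrow>
                   hullF x J s face_of hullF x {1..r} s \<and>
                   aff_dim (hullF x J s) = aff_dim (hullF x J t)"
    and I: "I \<subseteq> {1..r}"
    and Iface: "\<And>t. t \<in> {0<..<\<epsilon>} \<Longrightarrow> hullF x I t face_of hullF x {1..r} t"
  shows "\<forall>G. G face_of hullF x I 0 \<and> G \<noteq> hullF x I 0 \<longrightarrow>
           G \<subseteq> \<Union> {hullF x K 0 | K. K \<subseteq> {1..r} \<and>
                  (\<forall>t \<in> {0<..<\<epsilon>}. hullF x K t face_of hullF x I t \<and> hullF x K t \<noteq> hullF x I t)}"
proof (intro allI impI subsetI)
  fix G y assume G: "G face_of hullF x I 0 \<and> G \<noteq> hullF x I 0" and y: "y \<in> G"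
  let ?proper = "\<lambda>K. \<forall>t \<in> {0<..<\<epsilon>}. hullF x K t face_of hullF x I t \<and> hullF x K t \<noteq> hullF x I t"
  have "y \<in> closure (\<Union> {hullF x K 0 | K. K \<subseteq> {1..r} \<and> ?proper K})"
    unfolding closure_approachable
  proof (intro allI impI)
    fix \<delta> :: real assume \<delta>: "\<delta> > 0"
    have finI: "finite I" using I finite_subset by blast
    have contI: "\<And>i. i \<in> I \<Longrightarrow> continuous_on {0..<\<epsilon>} (\<lambda>t. x t i)" using cont I by blast
    obtain t K a where t: "t \<in> {0<..<\<epsilon>}" and KI: "K \<subseteq> I"
      and K: "hullF x K t face_of hullF x I t" "hullF x K t \<noteq> hullF x I t"
      and a: "a \<in> hullF x K 0" "dist a y < \<delta>"
      using hullF_proper_face_near_limit_face[OF finI eps contI conjunct1[OF G] conjunct2[OF G] y \<delta>] .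
    have "?proper K"
      using proper_subface_persists[OF stable I KI t _ Iface[OF t] K] by blast
    with KI I a show "\<exists>a\<in>\<Union> {hullF x K 0 | K. K \<subseteq> {1..r} \<and> ?proper K}. dist a y < \<delta>" by blast
  qed
  then show "y \<in> \<Union> {hullF x K 0 | K. K \<subseteq> {1..r} \<and> ?proper K}"
    by (simp add: closed_Union_hullF closure_closed)
qed

end
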